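(* Let $T\in(0,\infty]$ and let $K(T),M(T)\in\Im_T$. If $M(T)\approx K(T)$, then for every Banach function space $\widetilde{X}(0,T)$, $$K(T)\mapsto\widetilde{X}(0,T)\iff M(T)\mapsto\widetilde{X}(0,T).$$
   Context: $\Im_T$ is the collection of cones $K(T)$ of nonnegative measurable functions on $(0,T)$ equipped with functionals $\rho_{K(T)}:K(T)\to[0,\infty)$ such that $h\in K(T),\alpha\ge0$ implies $\alpha h\in K(T)$ and $\rho_{K(T)}(\alpha h)=\alpha\rho_{K(T)}(h)$, and $\rho_{K(T)}(h)=0$ implies $h=0$ a.e. on $(0,T)$. Covering: $M(T)\prec K(T)$ if there exist $C_0=C_0(T)>0$ and $C_1=C_1(T)\in[0,\infty)$ with $C_1(\infty)=0$ such that for each $h_1\in M(T)$ there is $h_2\in K(T)$ with $\rho_{K(T)}(h_2)\le C_0\rho_{M(T)}(h_1)$ and $h_1(t)\le h_2(t)+C_1\rho_{M(T)}(h_1)$ for $t\in(0,T)$. $M(T)\approx K(T)$ means $M(T)\prec K(T)$ and $K(T)\prec M(T)$. Embedding: $M(T)\mapsto\widetilde{X}(0,T)$ means $M(T)\subset\widetilde{X}(0,T)$ and there is a constant $C>0$ with $\|h\|_{\widetilde{X}(0,T)}\le C\rho_{M(T)}(h)$ for all $h\in M(T)$. *)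

theory Defs
  imports "HOL-Analysis.Analysis"
begin

definition Ioo0 :: "ereal \<Rightarrow> real set" where
  "Ioo0 T = {t. 0 < t \<and> ereal t < T}"

definition nonneg_meas :: "ereal \<Rightarrow> (real \<Rightarrow> real) \<Rightarrow> bool" where
  "nonneg_meas T f \<longleftrightarrow>
     f \<in> borel_measurable (restrict_space lebesgue (Ioo0 T)) \<and> (\<forall>t\<in>Ioo0 T. 0 \<le> f t)"

definition in_Im :: "ereal \<Rightarrow> (real \<Rightarrow> real) set \<Rightarrow> ((real \<Rightarrow> real) \<Rightarrow> real) \<Rightarrow> bool" where
  "in_Im T K \<rho> \<longleftrightarrow>
     (\<forall>h\<in>K. nonneg_meas T h \<and> 0 \<le> \<rho> h) \<and>
     (\<forall>h\<in>K. \<forall>\<alpha>::real. \<alpha> \<ge> 0 \<longrightarrow> (\<lambda>t. \<alpha> * h t) \<in> K \<and> \<rho> (\<lambda>t. \<alpha> * h t) = \<alpha> * \<rho> h) \<and>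
     (\<forall>h\<in>K. \<rho> h = 0 \<longrightarrow> (AE t in lebesgue. t \<in> Ioo0 T \<longrightarrow> h t = 0))"

text \<open>Covering M(T) \<prec> K(T); the condition C_1(\<infinity>) = 0 means C_1 = 0 when T = \<infinity>.\<close>
definition covered :: "ereal \<Rightarrow> (real \<Rightarrow> real) set \<Rightarrow> ((real \<Rightarrow> real) \<Rightarrow> real)
    \<Rightarrow> (real \<Rightarrow> real) set \<Rightarrow> ((real \<Rightarrow> real) \<Rightarrow> real) \<Rightarrow> bool" where
  "covered T M \<rho>M K \<rho>K \<longleftrightarrow>
     (\<exists>C0 C1::real. C0 > 0 \<and> C1 \<ge> 0 \<and> (T = \<infinity> \<longrightarrow> C1 = 0) \<and>
        (\<forall>h1\<in>M. \<exists>h2\<in>K. \<rho>K h2 \<le> C0 * \<rho>M h1 \<and>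
            (\<forall>t\<in>Ioo0 T. h1 t \<le> h2 t + C1 * \<rho>M h1)))"

definition equiv_cones :: "ereal \<Rightarrow> (real \<Rightarrow> real) set \<Rightarrow> ((real \<Rightarrow> real) \<Rightarrow> real)
    \<Rightarrow> (real \<Rightarrow> real) set \<Rightarrow> ((real \<Rightarrow> real) \<Rightarrow> real) \<Rightarrow> bool" where
  "equiv_cones T M \<rho>M K \<rho>K \<longleftrightarrow> covered T M \<rho>M K \<rho>K \<and> covered T K \<rho>K M \<rho>M"

text \<open>Banach function norm on (0,T) with Lebesgue measure (Bennett--Sharpley axioms P1--P5),
  defined on nonnegative measurable functions, with values in [0,\<infinity>].\<close>
definition function_norm :: "ereal \<Rightarrow> ((real \<Rightarrow> real) \<Rightarrow> ennreal) \<Rightarrow> bool" where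
  "function_norm T \<rho> \<longleftrightarrow>
     \<comment> \<open>P1\<close>
     (\<forall>f. nonneg_meas T f \<longrightarrow> (\<rho> f = 0 \<longleftrightarrow> (AE t in lebesgue. t \<in> Ioo0 T \<longrightarrow> f t = 0))) \<and>
     (\<forall>f a. nonneg_meas T f \<longrightarrow> a \<ge> 0 \<longrightarrow> \<rho> (\<lambda>t. a * f t) = ennreal a * \<rho> f) \<and>
     (\<forall>f g. nonneg_meas T f \<longrightarrow> nonneg_meas T g \<longrightarrow> \<rho> (\<lambda>t. f t + g t) \<le> \<rho> f + \<rho> g) \<and>
     \<comment> \<open>P2\<close>
     (\<forall>f g. nonneg_meas T f \<longrightarrow> nonneg_meas T g \<longrightarrow>
        (AE t in lebesgue. t \<in> Ioo0 T \<longrightarrow> g t \<le> f t) \<longrightarrow> \<rho> g \<le> \<rho> f) \<and>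
     \<comment> \<open>P3\<close>
     (\<forall>F f. (\<forall>n. nonneg_meas T (F n)) \<longrightarrow> nonneg_meas T f \<longrightarrow>
        (AE t in lebesgue. t \<in> Ioo0 T \<longrightarrow> incseq (\<lambda>n. F n t) \<and> (\<lambda>n. F n t) \<longlonglongrightarrow> f t) \<longrightarrow>
        (\<lambda>n. \<rho> (F n)) \<longlonglongrightarrow> \<rho> f) \<and>
     \<comment> \<open>P4\<close>
     (\<forall>E. E \<in> sets lebesgue \<longrightarrow> E \<subseteq> Ioo0 T \<longrightarrow> emeasure lebesgue E < \<infinity> \<longrightarrow>
        \<rho> (indicator E) < \<infinity>) \<and>
     \<comment> \<open>P5\<close>
     (\<forall>E. E \<in> sets lebesgue \<longrightarrow> E \<subseteq> Ioo0 T \<longrightarrow> emeasure lebesgue E < \<infinity> \<longrightarrow>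
        (\<exists>C::real. C \<ge> 0 \<and> (\<forall>f. nonneg_meas T f \<longrightarrow>
           (\<integral>\<^sup>+ t\<in>E. ennreal (f t) \<partial>lebesgue) \<le> ennreal C * \<rho> f)))"

definition bfs_space :: "ereal \<Rightarrow> ((real \<Rightarrow> real) \<Rightarrow> ennreal) \<Rightarrow> (real \<Rightarrow> real) set" where
  "bfs_space T \<rho> = {f. f \<in> borel_measurable (restrict_space lebesgue (Ioo0 T)) \<and> \<rho> (\<lambda>t. \<bar>f t\<bar>) < \<infinity>}"

definition bfs_norm :: "((real \<Rightarrow> real) \<Rightarrow> ennreal) \<Rightarrow> (real \<Rightarrow> real) \<Rightarrow> ennreal" where
  "bfs_norm \<rho> f = \<rho> (\<lambda>t. \<bar>f t\<bar>)"

definition embeds :: "ereal \<Rightarrow> (real \<Rightarrow> real) set \<Rightarrow> ((real \<Rightarrow> real) \<Rightarrow> real)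
    \<Rightarrow> ((real \<Rightarrow> real) \<Rightarrow> ennreal) \<Rightarrow> bool" where
  "embeds T M \<rho>M \<rho> \<longleftrightarrow> M \<subseteq> bfs_space T \<rho> \<and>
     (\<exists>C::real. C > 0 \<and> (\<forall>h\<in>M. bfs_norm \<rho> h \<le> ennreal (C * \<rho>M h)))"

end

theory Submission
  imports Defs
begin

text \<open>If M is covered by K, every h1 in M lies below h2 + C1 \<rho>M(h1) on (0,T) for some
  h2 in K, so by the lattice property and subadditivity of the function norm \<rho>
  we get \<rho>(h1) \<le> \<rho>(h2) + C1 \<rho>M(h1) \<rho>(\<chi>), where \<chi> is the indicator of (0,T).
  The first term is at most C C0 \<rho>M(h1) by the embedding of K; the second is a finite
  multiple of \<rho>M(h1), because either T < \<infinity> and \<rho>(\<chi>) < \<infinity> by axiom P4, or T = \<infinity> and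
  C1 = 0. So M embeds whenever K does, and the covering in the other direction gives
  the converse.\<close>

lemma sets_lebesgue_Ioo0: "Ioo0 T \<in> sets lebesgue"
proof -
  have "Ioo0 T = {0<..} \<inter> ereal -` {..<T}"
    by (auto simp: Ioo0_def)
  moreover have "open (ereal -` {..<T})"
    by (intro continuous_open_vimage) (auto intro: continuous_on_ereal)
  ultimately have "open (Ioo0 T)"
    by auto
  then show ?thesis
    by simp
qed

lemma emeasure_Ioo0_finite:
  assumes "T \<noteq> \<infinity>"
  shows "emeasure lebesgue (Ioo0 T) < \<infinity>"
proof -
  have "Ioo0 T \<subseteq> {0..real_of_ereal T}"
    using assms by (cases T) (auto simp: Ioo0_def)
  then have "emeasure lebesgue (Ioo0 T) \<le> emeasure lebesgue {0..real_of_ereal T}"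
    by (intro emeasure_mono) auto
  also have "\<dots> < \<infinity>"
    using emeasure_lborel_Icc_eq[of 0 "real_of_ereal T"] by simp
  finally show ?thesis .
qed

lemma nonneg_meas_const_indicator_Ioo0:
  assumes "c \<ge> 0"
  shows "nonneg_meas T (\<lambda>t. c * indicator (Ioo0 T) t)"
proof -
  have "(\<lambda>t. c * indicator (Ioo0 T) t) \<in> borel_measurable (restrict_space lebesgue (Ioo0 T))
      \<longleftrightarrow> (\<lambda>t. c) \<in> borel_measurable (restrict_space lebesgue (Ioo0 T))"
    by (rule measurable_cong) (auto simp: space_restrict_space)
  then show ?thesis
    using assms by (auto simp: nonneg_meas_def)
qed

lemma nonneg_meas_indicator_Ioo0: "nonneg_meas T (indicator (Ioo0 T))"
  using nonneg_meas_const_indicator_Ioo0[of 1 T] by simp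

lemma nonneg_meas_abs: "nonneg_meas T f \<Longrightarrow> nonneg_meas T (\<lambda>t. \<bar>f t\<bar>)"
  by (auto simp: nonneg_meas_def intro: borel_measurable_abs)

lemma nonneg_meas_add: "nonneg_meas T f \<Longrightarrow> nonneg_meas T g \<Longrightarrow> nonneg_meas T (\<lambda>t. f t + g t)"
  by (auto simp: nonneg_meas_def intro: borel_measurable_add)

lemma in_Im_nonneg_meas: "in_Im T K \<rho>K \<Longrightarrow> h \<in> K \<Longrightarrow> nonneg_meas T h"
  and in_Im_nonneg: "in_Im T K \<rho>K \<Longrightarrow> h \<in> K \<Longrightarrow> 0 \<le> \<rho>K h"
  by (auto simp: in_Im_def)

lemma embeds_iff_bfs_norm_bound:
  assumes "in_Im T M \<rho>M"
  shows "embeds T M \<rho>M \<rho> \<longleftrightarrow> (\<exists>C>0. \<forall>h\<in>M. bfs_norm \<rho> h \<le> ennreal (C * \<rho>M h))"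
proof -
  have "h \<in> bfs_space T \<rho>" if "h \<in> M" and "bfs_norm \<rho> h \<le> ennreal (C * \<rho>M h)" for h C
  proof -
    have "bfs_norm \<rho> h < \<infinity>"
      using order.strict_trans1[OF \<open>bfs_norm \<rho> h \<le> _\<close> ennreal_less_top] by simp
    moreover have "nonneg_meas T h"
      using assms \<open>h \<in> M\<close> by (rule in_Im_nonneg_meas)
    ultimately show ?thesis
      by (simp add: bfs_space_def bfs_norm_def nonneg_meas_def)
  qed
  then show ?thesis
    unfolding embeds_def by blast
qed

context
  fixes T :: ereal and \<rho> :: "(real \<Rightarrow> real) \<Rightarrow> ennreal"
  assumes norm: "function_norm T \<rho>"
begin

lemma function_norm_cmult:
  "nonneg_meas T f \<Longrightarrow> a \<ge> 0 \<Longrightarrow> \<rho> (\<lambda>t. a * f t) = ennreal a * \<rho> f"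
  using norm by (simp add: function_norm_def)

lemma function_norm_add_le:
  "nonneg_meas T f \<Longrightarrow> nonneg_meas T g \<Longrightarrow> \<rho> (\<lambda>t. f t + g t) \<le> \<rho> f + \<rho> g"
  using norm by (simp add: function_norm_def)

lemma function_norm_mono:
  assumes "nonneg_meas T f" "nonneg_meas T g" "\<forall>t\<in>Ioo0 T. g t \<le> f t"
  shows "\<rho> g \<le> \<rho> f"
  using norm assms by (simp add: function_norm_def)

lemma bfs_norm_nonneg_meas: "nonneg_meas T f \<Longrightarrow> bfs_norm \<rho> f = \<rho> f"
  unfolding bfs_norm_def
  by (intro antisym function_norm_mono nonneg_meas_abs) (auto simp: nonneg_meas_def)

lemma function_norm_indicator_Ioo0_finite: "T \<noteq> \<infinity> \<Longrightarrow> \<rho> (indicator (Ioo0 T)) < \<infinity>"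
  using norm sets_lebesgue_Ioo0 emeasure_Ioo0_finite by (simp add: function_norm_def)

lemma function_norm_le_add_const:
  assumes f: "nonneg_meas T f" and g: "nonneg_meas T g" and c: "c \<ge> 0"
    and le: "\<forall>t\<in>Ioo0 T. f t \<le> g t + c"
  shows "\<rho> f \<le> \<rho> g + ennreal c * \<rho> (indicator (Ioo0 T))"
proof -
  have const: "nonneg_meas T (\<lambda>t. c * indicator (Ioo0 T) t)"
    using c by (rule nonneg_meas_const_indicator_Ioo0)
  have "\<rho> f \<le> \<rho> (\<lambda>t. g t + c * indicator (Ioo0 T) t)"
    using le by (intro function_norm_mono nonneg_meas_add f g const) auto
  also have "\<dots> \<le> \<rho> g + \<rho> (\<lambda>t. c * indicator (Ioo0 T) t)"
    using g const by (rule function_norm_add_le)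
  also have "\<rho> (\<lambda>t. c * indicator (Ioo0 T) t) = ennreal c * \<rho> (indicator (Ioo0 T))"
    using c nonneg_meas_indicator_Ioo0 by (simp add: function_norm_cmult)
  finally show ?thesis .
qed

lemma function_norm_indicator_Ioo0_scaled_finite:
  assumes c: "c \<ge> 0" and c_infty: "T = \<infinity> \<longrightarrow> c = 0"
  obtains r where "r \<ge> 0"
    and "\<And>a. a \<ge> 0 \<Longrightarrow> ennreal (c * a) * \<rho> (indicator (Ioo0 T)) = ennreal (r * a)"
proof (cases "T = \<infinity>")
  case True
  then show ?thesis
    using c_infty that[of 0] by simp
next
  case False
  then obtain R where "R \<ge> 0" and R: "\<rho> (indicator (Ioo0 T)) = ennreal R"
    using function_norm_indicator_Ioo0_finite[OF False] by (auto simp: less_top_ennreal)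
  show ?thesis
  proof (rule that[of "c * R"])
    show "c * R \<ge> 0"
      using c \<open>R \<ge> 0\<close> by simp
    show "ennreal (c * a) * \<rho> (indicator (Ioo0 T)) = ennreal (c * R * a)" if "a \<ge> 0" for a
      using c \<open>R \<ge> 0\<close> that by (simp add: R ennreal_mult[symmetric] mult_ac)
  qed
qed

lemma embeds_if_covered:
  assumes K: "in_Im T K \<rho>K" and M: "in_Im T M \<rho>M"
    and cover: "covered T M \<rho>M K \<rho>K" and emb: "embeds T K \<rho>K \<rho>"
  shows "embeds T M \<rho>M \<rho>"
proof -
  obtain C0 C1 where C0: "C0 > 0" and C1: "C1 \<ge> 0" and C1_infty: "T = \<infinity> \<longrightarrow> C1 = 0"
    and cov: "\<forall>h1\<in>M. \<exists>h2\<in>K. \<rho>K h2 \<le> C0 * \<rho>M h1 \<and> (\<forall>t\<in>Ioo0 T. h1 t \<le> h2 t + C1 * \<rho>M h1)"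
    using cover unfolding covered_def by blast
  obtain C where C: "C > 0" and emb_K: "\<forall>h\<in>K. bfs_norm \<rho> h \<le> ennreal (C * \<rho>K h)"
    using emb unfolding embeds_def by blast
  obtain r where "r \<ge> 0"
    and r: "\<And>a. a \<ge> 0 \<Longrightarrow> ennreal (C1 * a) * \<rho> (indicator (Ioo0 T)) = ennreal (r * a)"
    using function_norm_indicator_Ioo0_scaled_finite[OF C1 C1_infty] by blast
  define D where "D = C * C0 + r"
  have "D > 0"
    using C C0 \<open>r \<ge> 0\<close> by (simp add: D_def add_pos_nonneg)
  have bound: "bfs_norm \<rho> h1 \<le> ennreal (D * \<rho>M h1)" if "h1 \<in> M" for h1
  proof -
    obtain h2 where "h2 \<in> K" and \<rho>K_h2: "\<rho>K h2 \<le> C0 * \<rho>M h1"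
      and h1_le: "\<forall>t\<in>Ioo0 T. h1 t \<le> h2 t + C1 * \<rho>M h1"
      using cov \<open>h1 \<in> M\<close> by blast
    have h1: "nonneg_meas T h1" and h2: "nonneg_meas T h2" and "0 \<le> \<rho>M h1"
      using \<open>h1 \<in> M\<close> \<open>h2 \<in> K\<close> K M by (auto intro: in_Im_nonneg_meas in_Im_nonneg)
    have "\<rho> h2 \<le> ennreal (C * C0 * \<rho>M h1)"
    proof -
      have "\<rho> h2 = bfs_norm \<rho> h2"
        using h2 by (simp add: bfs_norm_nonneg_meas)
      also have "\<dots> \<le> ennreal (C * \<rho>K h2)"
        using emb_K \<open>h2 \<in> K\<close> by blast
      also have "\<dots> \<le> ennreal (C * C0 * \<rho>M h1)"
        using \<rho>K_h2 C by (intro ennreal_leI) (simp add: mult.assoc)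
      finally show ?thesis .
    qed
    moreover have "\<rho> h1 \<le> \<rho> h2 + ennreal (r * \<rho>M h1)"
      using function_norm_le_add_const[OF h1 h2 _ h1_le] C1 \<open>0 \<le> \<rho>M h1\<close> r by simp
    ultimately have "\<rho> h1 \<le> ennreal (C * C0 * \<rho>M h1) + ennreal (r * \<rho>M h1)"
      by (meson add_right_mono order_trans)
    also have "\<dots> = ennreal (D * \<rho>M h1)"
      using C C0 \<open>r \<ge> 0\<close> \<open>0 \<le> \<rho>M h1\<close> by (simp add: D_def distrib_right ennreal_plus)
    finally show ?thesis
      using h1 by (simp add: bfs_norm_nonneg_meas)
  qed
  show ?thesis
    using M bound \<open>D > 0\<close> by (auto simp: embeds_iff_bfs_norm_bound)
qed

end

theorem corollary4p1:
  fixes T :: ereal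
    and K M :: "(real \<Rightarrow> real) set"
    and \<rho>K \<rho>M :: "(real \<Rightarrow> real) \<Rightarrow> real"
  assumes "0 < T"
    and "in_Im T K \<rho>K" and "in_Im T M \<rho>M"
    and "equiv_cones T M \<rho>M K \<rho>K"
  shows "\<forall>\<rho>::(real \<Rightarrow> real) \<Rightarrow> ennreal. function_norm T \<rho> \<longrightarrow>
           (embeds T K \<rho>K \<rho> \<longleftrightarrow> embeds T M \<rho>M \<rho>)"
  using embeds_if_covered[OF _ assms(2,3)] embeds_if_covered[OF _ assms(3,2)] assms(4)
  unfolding equiv_cones_def by blast

end
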